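(* Any two node-edge-checkable problems $P$ and $\Pi$ satisfy $\Pi\times\tau_P(\Pi)\xrightarrow{0}P$.
   Context: Fix $\Delta$. A node-edge-checkable problem $\Pi=(\Sigma_\Pi,\mathcal{N}_\Pi,\mathcal{E}_\Pi)$ has a finite label set, a node constraint $\mathcal{N}_\Pi$ (a set of cardinality-$\Delta$ multisets over $\Sigma_\Pi$) and an edge constraint $\mathcal{E}_\Pi$ (a set of cardinality-$2$ multisets). Relaxation. $\Pi\xrightarrow{0}\Pi'$ means there is a map $f$ with the following properties. For every $C=L_1\dots L_\Delta\in\mathcal{N}_\Pi$ and every $j$, $f$ assigns a label $f(C,j)\in\Sigma_{\Pi'}$. The map must satisfy: - $f(C,1)\dots f(C,\Delta)\in\mathcal{N}_{\Pi'}$; - whenever the $j$-th entry of $C$ and the $j'$-th entry of $C'$ form an element of $\mathcal{E}_\Pi$, then $f(C,j)f(C',j')\in\mathcal{E}_{\Pi'}$. Product. $\Pi\times\Pi'$ has labels $\Sigma_\Pi\times\Sigma_{\Pi'}$. Its node configurations are the multisets $(L_1,L'_1)\dots(L_\Delta,L'_\Delta)$ with $L_1\dots L_\Delta\in\mathcal{N}_\Pi$ and $L'_1\dots L'_\Delta\in\mathcal{N}_{\Pi'}$. Its edge configurations are defined analogously. The problem $\mathrm{R}^*(P)$ is defined as follows. - Labels are the nonempty subsets of $\Sigma_P$. - Node configurations are the $S_1\dots S_\Delta$ admitting $L_i\in S_i$ with $L_1\dots L_\Delta\in\mathcal{N}_P$. - Edge configurations are the $S_1S_2$ with $L_1L_2\in\mathcal{E}_P$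 for all $L_1\in S_1,L_2\in S_2$. The problem $\tau_P(\Pi)$ is defined as follows. - Labels are all functions $\Sigma_\Pi\to\Sigma_{\mathrm{R}^*(P)}$. - $f_1\dots f_\Delta$ is a node configuration iff $f_1(L_1)\dots f_\Delta(L_\Delta)\in\mathcal{N}_{\mathrm{R}^*(P)}$ for all $L_1\dots L_\Delta\in\mathcal{N}_\Pi$. - $f_1f_2$ is an edge configuration iff $f_1(L_1)f_2(L_2)\in\mathcal{E}_{\mathrm{R}^*(P)}$ for all $L_1L_2\in\mathcal{E}_\Pi$. *)

theory Defs
  imports Main "HOL-Library.Multiset" "HOL-Library.FuncSet"
begin

record 'a necp =
  labels :: "'a set"
  nodes  :: "'a multiset set"
  edges  :: "'a multiset set"

definition wf_necp :: "nat \<Rightarrow> 'a necp \<Rightarrow> bool" where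
  "wf_necp \<Delta> P \<longleftrightarrow> finite (labels P)
     \<and> (\<forall>C\<in>nodes P. size C = \<Delta> \<and> set_mset C \<subseteq> labels P)
     \<and> (\<forall>C\<in>edges P. size C = 2 \<and> set_mset C \<subseteq> labels P)"

text \<open>Zero-round relaxation. Each node configuration C is presented as a sequence
(ord C) of its entries (indices 0..Delta-1); f C j is the label assigned to the j-th entry.\<close>
definition relax0 :: "nat \<Rightarrow> 'a necp \<Rightarrow> 'b necp \<Rightarrow> bool" where
  "relax0 \<Delta> P Q \<longleftrightarrow> (\<exists>(ord :: 'a multiset \<Rightarrow> 'a list) (f :: 'a multiset \<Rightarrow> nat \<Rightarrow> 'b).
     (\<forall>C\<in>nodes P. length (ord C) = \<Delta> \<and> mset (ord C) = C)
   \<and> (\<forall>C\<in>nodes P. (\<forall>j<\<Delta>. f C j \<in> labels Q) \<and> mset (map (f C) [0..<\<Delta>]) \<in> nodes Q)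
   \<and> (\<forall>C\<in>nodes P. \<forall>C'\<in>nodes P. \<forall>j<\<Delta>. \<forall>j'<\<Delta>.
        {#ord C ! j, ord C' ! j'#} \<in> edges P \<longrightarrow> {#f C j, f C' j'#} \<in> edges Q))"

definition prod_necp :: "'a necp \<Rightarrow> 'b necp \<Rightarrow> ('a \<times> 'b) necp" where
  "prod_necp P Q = \<lparr> labels = labels P \<times> labels Q,
     nodes = {M. image_mset fst M \<in> nodes P \<and> image_mset snd M \<in> nodes Q},
     edges = {M. image_mset fst M \<in> edges P \<and> image_mset snd M \<in> edges Q} \<rparr>"

definition Rstar :: "'p necp \<Rightarrow> 'p set necp" where
  "Rstar P = \<lparr> labels = {S. S \<noteq> {} \<and> S \<subseteq> labels P},
     nodes = {M. set_mset M \<subseteq> {S. S \<noteq> {} \<and> S \<subseteq> labels P} \<and>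
                 (\<exists>Ss Ls. mset Ss = M \<and> length Ls = length Ss \<and>
                    (\<forall>i<length Ss. Ls ! i \<in> Ss ! i) \<and> mset Ls \<in> nodes P)},
     edges = {{#S1, S2#} | S1 S2. S1 \<noteq> {} \<and> S1 \<subseteq> labels P \<and> S2 \<noteq> {} \<and> S2 \<subseteq> labels P \<and>
                 (\<forall>L1\<in>S1. \<forall>L2\<in>S2. {#L1, L2#} \<in> edges P)} \<rparr>"

definition tau :: "nat \<Rightarrow> 'p necp \<Rightarrow> 'a necp \<Rightarrow> ('a \<Rightarrow> 'p set) necp" where
  "tau \<Delta> P Q = \<lparr> labels = labels Q \<rightarrow>\<^sub>E labels (Rstar P),
     nodes = {F. size F = \<Delta> \<and> set_mset F \<subseteq> (labels Q \<rightarrow>\<^sub>E labels (Rstar P)) \<and>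
                 (\<forall>fs Ls. mset fs = F \<and> length Ls = length fs \<and> mset Ls \<in> nodes Q \<longrightarrow>
                     mset (map2 (\<lambda>f L. f L) fs Ls) \<in> nodes (Rstar P))},
     edges = {{#f1, f2#} | f1 f2. f1 \<in> labels Q \<rightarrow>\<^sub>E labels (Rstar P) \<and>
                 f2 \<in> labels Q \<rightarrow>\<^sub>E labels (Rstar P) \<and>
                 (\<forall>L1 L2. {#L1, L2#} \<in> edges Q \<longrightarrow> {#f1 L1, f2 L2#} \<in> edges (Rstar P))} \<rparr>"

end

theory Submission
  imports Defs
begin

text \<open>
  A node configuration of \<open>\<Pi> \<times> \<tau>\<^sub>P(\<Pi>)\<close> consists of pairs \<open>(L\<^sub>i, f\<^sub>i)\<close>. Since
  \<open>L\<^sub>1 \<dots> L\<^sub>\<Delta>\<close> is a node configuration of \<open>\<Pi>\<close> and \<open>f\<^sub>1 \<dots> f\<^sub>\<Delta>\<close> one of \<open>\<tau>\<^sub>P(\<Pi>)\<close>,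
  the sets \<open>f\<^sub>1(L\<^sub>1) \<dots> f\<^sub>\<Delta>(L\<^sub>\<Delta>)\<close> form a node configuration of \<open>R\<^sup>*(P)\<close>, so one can
  pick \<open>L'\<^sub>i \<in> f\<^sub>i(L\<^sub>i)\<close> forming a node configuration of \<open>P\<close>; the relaxation outputs
  \<open>L'\<^sub>i\<close> on the entry \<open>(L\<^sub>i, f\<^sub>i)\<close>. Any output lies in \<open>f(L)\<close> for its entry \<open>(L, f)\<close>,
  and for an edge \<open>(L, f) (L', f')\<close> of the product \<open>f(L) f'(L')\<close> is an edge of
  \<open>R\<^sup>*(P)\<close>, so every choice from these two sets is an edge of \<open>P\<close>.
\<close>

lemma doubleton_mset_eq_iff:
  "{#a, b#} = {#c, d#} \<longleftrightarrow> (a = c \<and> b = d) \<or> (a = d \<and> b = c)"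
  by (auto simp: add_eq_conv_ex)

lemma relax0_by_relation:
  assumes "wf_necp \<Delta> Q"
    and node: "\<And>C. C \<in> nodes P \<Longrightarrow> \<exists>N \<in> nodes Q. rel_mset R N C"
    and edge: "\<And>x y L M. {#x, y#} \<in> edges P \<Longrightarrow> R L x \<Longrightarrow> R M y \<Longrightarrow> {#L, M#} \<in> edges Q"
  shows "relax0 \<Delta> P Q"
proof -
  obtain ord outs where choice: "\<And>C. C \<in> nodes P \<Longrightarrow>
      mset (ord C) = C \<and> list_all2 R (outs C) (ord C) \<and> mset (outs C) \<in> nodes Q"
    using node unfolding rel_mset_def by metis
  have len: "length (outs C) = \<Delta>" "length (ord C) = \<Delta>" if "C \<in> nodes P" for C
    using choice[OF that] \<open>wf_necp \<Delta> Q\<close> unfolding wf_necp_def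
    by (metis size_mset, metis size_mset list_all2_lengthD)
  define f where "f C j = outs C ! j" for C j
  have "f C j \<in> labels Q" if "C \<in> nodes P" "j < \<Delta>" for C j
    using choice[OF that(1)] len[OF that(1)] that(2) \<open>wf_necp \<Delta> Q\<close>
    unfolding wf_necp_def f_def by (metis nth_mem set_mset_mset subsetD)
  moreover have "mset (map (f C) [0..<\<Delta>]) \<in> nodes Q" if "C \<in> nodes P" for C
    using choice[OF that] len[OF that] unfolding f_def by (metis map_nth)
  moreover have "{#f C j, f C' j'#} \<in> edges Q"
    if "C \<in> nodes P" "C' \<in> nodes P" "j < \<Delta>" "j' < \<Delta>" "{#ord C ! j, ord C' ! j'#} \<in> edges P"
    for C C' j j'
    using that choice len edge list_all2_nthD unfolding f_def by metis
  ultimately show ?thesis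
    unfolding relax0_def using choice len by blast
qed

lemma edges_prod_necp_iff:
  "{#x, y#} \<in> edges (prod_necp P Q) \<longleftrightarrow>
     {#fst x, fst y#} \<in> edges P \<and> {#snd x, snd y#} \<in> edges Q"
  by (simp add: prod_necp_def)

lemma edges_Rstar_memD:
  assumes "{#S, T#} \<in> edges (Rstar P)" "L \<in> S" "M \<in> T"
  shows "{#L, M#} \<in> edges P"
  using assms by (auto simp: Rstar_def doubleton_mset_eq_iff add_mset_commute)

lemma edges_tau_apply:
  assumes "{#f, g#} \<in> edges (tau \<Delta> P Q)" "{#L, M#} \<in> edges Q"
  shows "{#f L, g M#} \<in> edges (Rstar P)"
  using assms by (auto simp: tau_def doubleton_mset_eq_iff add_mset_commute)

lemma nodes_Rstar_rel_mset:
  assumes "M \<in> nodes (Rstar P)"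
  shows "\<exists>N \<in> nodes P. rel_mset (\<in>) N M"
proof -
  from assms obtain Ss Ls where "mset Ss = M" "length Ls = length Ss"
    "\<forall>i < length Ss. Ls ! i \<in> Ss ! i" "mset Ls \<in> nodes P"
    unfolding Rstar_def by auto
  then have "rel_mset (\<in>) (mset Ls) M"
    unfolding rel_mset_def list_all2_conv_all_nth by metis
  with \<open>mset Ls \<in> nodes P\<close> show ?thesis
    by blast
qed

lemma nodes_prod_tau_apply:
  assumes "C \<in> nodes (prod_necp Q (tau \<Delta> P Q))"
  shows "image_mset (\<lambda>x. snd x (fst x)) C \<in> nodes (Rstar P)"
proof -
  obtain xs where xs: "mset xs = C"
    using ex_mset by blast
  have "mset (map fst xs) \<in> nodes Q" "mset (map snd xs) \<in> nodes (tau \<Delta> P Q)"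
    using assms xs by (auto simp: prod_necp_def)
  then have "mset (map2 (\<lambda>f L. f L) (map snd xs) (map fst xs)) \<in> nodes (Rstar P)"
    unfolding tau_def by auto
  moreover have "map2 (\<lambda>f L. f L) (map snd xs) (map fst xs) = map (\<lambda>x. snd x (fst x)) xs"
    by (induct xs) auto
  ultimately show ?thesis
    using xs by simp
qed

theorem mainTheorem9:
  fixes \<Delta> :: nat and P :: "'p necp" and Q :: "'a necp"
  assumes "wf_necp \<Delta> P" and "wf_necp \<Delta> Q"
  shows "relax0 \<Delta> (prod_necp Q (tau \<Delta> P Q)) P"
proof (rule relax0_by_relation[where R = "\<lambda>L x. L \<in> snd x (fst x)"])
  show "wf_necp \<Delta> P"
    by fact
  show "\<exists>N \<in> nodes P. rel_mset (\<lambda>L x. L \<in> snd x (fst x)) N C"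
    if "C \<in> nodes (prod_necp Q (tau \<Delta> P Q))" for C
    using nodes_Rstar_rel_mset[OF nodes_prod_tau_apply[OF that]]
    by (simp add: multiset.rel_map)
  show "{#L, M#} \<in> edges P"
    if "{#x, y#} \<in> edges (prod_necp Q (tau \<Delta> P Q))" "L \<in> snd x (fst x)" "M \<in> snd y (fst y)"
    for x y L M
    using that by (auto simp: edges_prod_necp_iff intro: edges_Rstar_memD edges_tau_apply)
qed

end
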